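(* Let $(X,d,f)$ be a TDS. Then for all $\alpha>0$, $$\sup_{\mu\in M(X,f)}\underline h^{BK}_\mu(f,\alpha)\le h^\alpha_{top}(f,X).$$
   Context: A TDS $(X,d,f)$: compact metric space and continuous $f$; $M(X,f)$ is the set of $f$-invariant Borel probability measures. $d_n^\alpha(x,y)=\max_{0\le i\le n-1}e^{\alpha i}d(f^ix,f^iy)$; $B_n^\alpha(x,\varepsilon)=\{y:d_n^\alpha(x,y)<\varepsilon\}$. Lower $\alpha$-local Brin–Katok entropy: $\underline h^{BK}_\mu(f,\alpha)=\int_X\lim_{\varepsilon\to0}\liminf_{n\to\infty}\frac{-\log\mu(B_n^\alpha(x,\varepsilon))}{n}\,d\mu(x)$. $\alpha$-topological entropy: $E\subset X$ is $(n,\alpha,\varepsilon)$-spanning if every $x\in X$ has $y\in E$ with $d_n^\alpha(x,y)<\varepsilon$; $r_n(f,\alpha,X,\varepsilon)$ is the minimal cardinality of such a set; $h^\alpha_{top}(f,X)=\lim_{\varepsilon\to0}\limsup_{n\to\infty}\frac1n\log r_n(f,\alpha,X,\varepsilon)$. *)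

theory Defs
  imports "HOL-Probability.Probability"
begin

text \<open>Topological dynamical system: a compact metric space X (a compact subset of a
metric type, with the induced metric) and a continuous self map f of X.\<close>
definition TDS :: "'a::metric_space set \<Rightarrow> ('a \<Rightarrow> 'a) \<Rightarrow> bool" where
  "TDS X f \<longleftrightarrow> compact X \<and> continuous_on X f \<and> f ` X \<subseteq> X"

definition invariant_measures :: "'a::metric_space set \<Rightarrow> ('a \<Rightarrow> 'a) \<Rightarrow> 'a measure set" where
  "invariant_measures X f =
     {\<mu>. prob_space \<mu> \<and> sets \<mu> = sets (restrict_space borel X) \<and>
          (\<forall>A \<in> sets \<mu>. emeasure \<mu> (f -` A \<inter> X) = emeasure \<mu> A)}"

definition dn_alpha :: "('a::metric_space \<Rightarrow> 'a) \<Rightarrow> real \<Rightarrow> nat \<Rightarrow> 'a \<Rightarrow> 'a \<Rightarrow> real" where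
  "dn_alpha f \<alpha> n x y = (MAX i \<in> {..<n}. exp (\<alpha> * real i) * dist ((f ^^ i) x) ((f ^^ i) y))"

definition Bn_alpha :: "'a::metric_space set \<Rightarrow> ('a \<Rightarrow> 'a) \<Rightarrow> real \<Rightarrow> nat \<Rightarrow> 'a \<Rightarrow> real \<Rightarrow> 'a set" where
  "Bn_alpha X f \<alpha> n x \<epsilon> = {y \<in> X. dn_alpha f \<alpha> n x y < \<epsilon>}"

definition neg_log_ratio :: "'a measure \<Rightarrow> 'a set \<Rightarrow> nat \<Rightarrow> ereal" where
  "neg_log_ratio \<mu> B n =
     (if measure \<mu> B = 0 then \<infinity> else ereal (- ln (measure \<mu> B) / real n))"

definition local_lower_entropy ::
  "'a::metric_space set \<Rightarrow> ('a \<Rightarrow> 'a) \<Rightarrow> 'a measure \<Rightarrow> real \<Rightarrow> 'a \<Rightarrow> ereal" where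
  "local_lower_entropy X f \<mu> \<alpha> x =
     Lim (at_right (0::real))
       (\<lambda>\<epsilon>. liminf (\<lambda>n. neg_log_ratio \<mu> (Bn_alpha X f \<alpha> n x \<epsilon>) n))"

definition lower_BK_entropy ::
  "'a::metric_space set \<Rightarrow> ('a \<Rightarrow> 'a) \<Rightarrow> 'a measure \<Rightarrow> real \<Rightarrow> ereal" where
  "lower_BK_entropy X f \<mu> \<alpha> =
     enn2ereal (\<integral>\<^sup>+ x. e2ennreal (local_lower_entropy X f \<mu> \<alpha> x) \<partial>\<mu>)"

definition spanning :: "'a::metric_space set \<Rightarrow> ('a \<Rightarrow> 'a) \<Rightarrow> real \<Rightarrow> nat \<Rightarrow> real \<Rightarrow> 'a set \<Rightarrow> bool" where
  "spanning X f \<alpha> n \<epsilon> E \<longleftrightarrow> E \<subseteq> X \<and> (\<forall>x\<in>X. \<exists>y\<in>E. dn_alpha f \<alpha> n x y < \<epsilon>)"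

definition r_span :: "'a::metric_space set \<Rightarrow> ('a \<Rightarrow> 'a) \<Rightarrow> real \<Rightarrow> nat \<Rightarrow> real \<Rightarrow> nat" where
  "r_span X f \<alpha> n \<epsilon> = (LEAST k. \<exists>E. finite E \<and> card E = k \<and> spanning X f \<alpha> n \<epsilon> E)"

definition top_entropy_alpha :: "'a::metric_space set \<Rightarrow> ('a \<Rightarrow> 'a) \<Rightarrow> real \<Rightarrow> ereal" where
  "top_entropy_alpha X f \<alpha> =
     Lim (at_right (0::real))
       (\<lambda>\<epsilon>. limsup (\<lambda>n. ereal (ln (real (r_span X f \<alpha> n \<epsilon>)) / real n)))"

end

theory Submission
  imports Defs "HOL-Real_Asymp.Real_Asymp"
begin

text \<open>Let \<open>\<mu>\<close> be a Borel probability measure on \<open>X\<close> and let \<open>t > s\<close> both exceed the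
  \<open>\<alpha>\<close>-topological entropy. For small \<open>\<epsilon>\<close> and large \<open>n\<close> some \<open>(n, \<alpha>, \<epsilon>/2)\<close>-spanning
  set has at most \<open>exp (n s)\<close> points. By the triangle inequality for \<open>d\<^sub>n\<^sup>\<alpha>\<close>, the points \<open>x\<close>
  with \<open>\<mu> (B\<^sub>n\<^sup>\<alpha>(x, \<epsilon>)) \<le> exp (- n t)\<close> for all large \<open>n\<close> are covered by at most
  \<open>exp (n s)\<close> of their own \<open>\<epsilon>\<close>-balls, one for each point of the spanning set that is
  \<open>\<epsilon>/2\<close>-close to one of them. So they form a set of outer measure at most
  \<open>exp (- n (t - s))\<close> for every large \<open>n\<close>, a null set. Hence the lower local entropy
  is at most \<open>t\<close> almost everywhere, and integrating gives the bound.\<close>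

lemma continuous_on_funpow:
  assumes "continuous_on X f" "f ` X \<subseteq> X"
  shows "continuous_on X (f ^^ n)"
proof (induction n)
  case 0
  then show ?case by (simp add: continuous_on_id)
next
  case (Suc n)
  have "(f ^^ n) ` X \<subseteq> X"
    using assms(2) by (induction n) auto
  then show ?case
    using continuous_on_compose2[OF assms(1) Suc] by simp
qed

lemma continuous_on_Max:
  fixes g :: "'i \<Rightarrow> 'a::topological_space \<Rightarrow> 'b::linorder_topology"
  assumes "finite I" "\<And>i. i \<in> I \<Longrightarrow> continuous_on S (g i)"
  shows "continuous_on S (\<lambda>y. MAX i\<in>I. g i y)"
  using assms
proof (induction I rule: finite_induct)
  case empty
  then show ?case by simp
next
  case (insert i I)
  show ?case
  proof (cases "I = {}")
    case False
    with insert.hyps have "(\<lambda>y. MAX j\<in>insert i I. g j y) = (\<lambda>y. max (g i y) (MAX j\<in>I. g j y))"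
      by simp
    moreover have "continuous_on S (\<lambda>y. max (g i y) (MAX j\<in>I. g j y))"
      using insert.IH insert.prems by (intro continuous_on_max) auto
    ultimately show ?thesis by (simp only:)
  qed (use insert in simp)
qed

lemma dn_alpha_commute: "dn_alpha f \<alpha> n x y = dn_alpha f \<alpha> n y x"
  unfolding dn_alpha_def by (simp add: dist_commute)

lemma dn_alpha_self: "n > 0 \<Longrightarrow> dn_alpha f \<alpha> n x x = 0"
  unfolding dn_alpha_def by (simp add: image_constant_conv lessThan_empty_iff)

lemma dn_alpha_triangle:
  assumes "n > 0"
  shows "dn_alpha f \<alpha> n x z \<le> dn_alpha f \<alpha> n x y + dn_alpha f \<alpha> n y z"
proof -
  have "exp (\<alpha> * i) * dist ((f ^^ i) x) ((f ^^ i) z) \<le> dn_alpha f \<alpha> n x y + dn_alpha f \<alpha> n y z"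
    if "i < n" for i
  proof -
    have "exp (\<alpha> * i) * dist ((f ^^ i) x) ((f ^^ i) z)
        \<le> exp (\<alpha> * i) * dist ((f ^^ i) x) ((f ^^ i) y) + exp (\<alpha> * i) * dist ((f ^^ i) y) ((f ^^ i) z)"
      by (simp add: dist_triangle flip: distrib_left)
    also have "\<dots> \<le> dn_alpha f \<alpha> n x y + dn_alpha f \<alpha> n y z"
      unfolding dn_alpha_def using that by (intro add_mono Max_ge) auto
    finally show ?thesis .
  qed
  then show ?thesis
    using assms unfolding dn_alpha_def[of f \<alpha> n x z] by (subst Max_le_iff) auto
qed

lemma continuous_on_dn_alpha:
  assumes "continuous_on X f" "f ` X \<subseteq> X"
  shows "continuous_on X (dn_alpha f \<alpha> n x)"
  unfolding dn_alpha_def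
  by (intro continuous_on_Max continuous_intros continuous_on_funpow[OF assms]) simp

lemma openin_Bn_alpha:
  assumes "continuous_on X f" "f ` X \<subseteq> X"
  shows "openin (top_of_set X) (Bn_alpha X f \<alpha> n x \<epsilon>)"
proof -
  have "Bn_alpha X f \<alpha> n x \<epsilon> = X \<inter> dn_alpha f \<alpha> n x -` {..<\<epsilon>}"
    by (auto simp: Bn_alpha_def)
  then show ?thesis
    using continuous_openin_preimage_gen[OF continuous_on_dn_alpha[OF assms]] by simp
qed

lemma Bn_alpha_in_sets:
  assumes "continuous_on X f" "f ` X \<subseteq> X" "sets \<mu> = sets (restrict_space borel X)"
  shows "Bn_alpha X f \<alpha> n x \<epsilon> \<in> sets \<mu>"
proof -
  obtain V where "open V" "Bn_alpha X f \<alpha> n x \<epsilon> = X \<inter> V"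
    using openin_Bn_alpha[OF assms(1,2)] by (meson openin_open)
  then show ?thesis
    using assms(3) by (auto simp: sets_restrict_space)
qed

lemma mem_Bn_alpha_if_near:
  assumes "n > 0" "z \<in> X" "dn_alpha f \<alpha> n x y < \<delta>" "dn_alpha f \<alpha> n z y < \<delta>'"
  shows "z \<in> Bn_alpha X f \<alpha> n x (\<delta> + \<delta>')"
proof -
  have "dn_alpha f \<alpha> n x z \<le> dn_alpha f \<alpha> n x y + dn_alpha f \<alpha> n y z"
    using \<open>n > 0\<close> by (rule dn_alpha_triangle)
  also have "\<dots> < \<delta> + \<delta>'"
    using assms(3,4) dn_alpha_commute[of f \<alpha> n y z] by linarith
  finally show ?thesis
    using \<open>z \<in> X\<close> by (simp add: Bn_alpha_def)
qed

lemma finite_spanning_set_exists: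
  assumes "TDS X f" "n > 0" "\<epsilon> > 0"
  obtains E where "finite E" "spanning X f \<alpha> n \<epsilon> E"
proof -
  have cont: "continuous_on X f" "f ` X \<subseteq> X" and "compact X"
    using assms(1) by (auto simp: TDS_def)
  have "\<forall>x. \<exists>V. open V \<and> Bn_alpha X f \<alpha> n x \<epsilon> = X \<inter> V"
    using openin_Bn_alpha[OF cont, unfolded openin_open] by blast
  then obtain V where V: "\<And>x. open (V x)" "\<And>x. Bn_alpha X f \<alpha> n x \<epsilon> = X \<inter> V x"
    by metis
  have "x \<in> V x" if "x \<in> X" for x
  proof -
    have "x \<in> Bn_alpha X f \<alpha> n x \<epsilon>"
      using that assms(2,3) by (simp add: Bn_alpha_def dn_alpha_self)
    then show ?thesis using V(2) by blast
  qed
  then have "X \<subseteq> (\<Union>x\<in>X. V x)" by blast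
  then obtain E where E: "E \<subseteq> X" "finite E" "X \<subseteq> (\<Union>x\<in>E. V x)"
    using compactE_image[OF \<open>compact X\<close>, of X V] V(1) by blast
  have "spanning X f \<alpha> n \<epsilon> E"
    unfolding spanning_def
  proof (intro conjI ballI)
    fix z assume "z \<in> X"
    with E(3) obtain y where "y \<in> E" "z \<in> V y" by blast
    with \<open>z \<in> X\<close> have "z \<in> Bn_alpha X f \<alpha> n y \<epsilon>"
      using V(2)[of y] by blast
    with \<open>y \<in> E\<close> show "\<exists>y\<in>E. dn_alpha f \<alpha> n z y < \<epsilon>"
      by (auto simp: Bn_alpha_def dn_alpha_commute[of f \<alpha> n z])
  qed (rule E(1))
  with E(2) show thesis by (rule that)
qed

lemma spanning_mono:
  assumes "spanning X f \<alpha> n \<epsilon> E" "\<epsilon> \<le> \<epsilon>'"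
  shows "spanning X f \<alpha> n \<epsilon>' E"
proof -
  have "\<exists>y\<in>E. dn_alpha f \<alpha> n x y < \<epsilon>'" if "x \<in> X" for x
  proof -
    from assms(1) that obtain y where "y \<in> E" "dn_alpha f \<alpha> n x y < \<epsilon>"
      unfolding spanning_def by blast
    moreover from \<open>dn_alpha f \<alpha> n x y < \<epsilon>\<close> assms(2) have "dn_alpha f \<alpha> n x y < \<epsilon>'"
      by linarith
    ultimately show ?thesis by blast
  qed
  with assms(1) show ?thesis
    unfolding spanning_def by blast
qed

lemma r_span_spanning_set:
  assumes "TDS X f" "n > 0" "\<epsilon> > 0"
  obtains E where "finite E" "card E = r_span X f \<alpha> n \<epsilon>" "spanning X f \<alpha> n \<epsilon> E"
proof -
  obtain E where "finite E" "spanning X f \<alpha> n \<epsilon> E"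
    using finite_spanning_set_exists[OF assms] .
  then have "\<exists>k E. finite E \<and> card E = k \<and> spanning X f \<alpha> n \<epsilon> E"
    by blast
  then have "\<exists>E. finite E \<and> card E = r_span X f \<alpha> n \<epsilon> \<and> spanning X f \<alpha> n \<epsilon> E"
    unfolding r_span_def by (rule LeastI_ex)
  then show thesis using that by blast
qed

lemma r_span_antimono:
  assumes "TDS X f" "n > 0" "0 < \<epsilon>" "\<epsilon> \<le> \<epsilon>'"
  shows "r_span X f \<alpha> n \<epsilon>' \<le> r_span X f \<alpha> n \<epsilon>"
proof -
  obtain E where "finite E" "card E = r_span X f \<alpha> n \<epsilon>" "spanning X f \<alpha> n \<epsilon> E"
    using r_span_spanning_set[OF assms(1-3)] .
  moreover from this(3) assms(4) have "spanning X f \<alpha> n \<epsilon>' E"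
    by (rule spanning_mono)
  ultimately have "\<exists>E'. finite E' \<and> card E' = r_span X f \<alpha> n \<epsilon> \<and> spanning X f \<alpha> n \<epsilon>' E'"
    by blast
  then show ?thesis
    unfolding r_span_def[of X f \<alpha> n \<epsilon>'] by (rule Least_le)
qed

lemma Lim_at_right_0_antimono:
  fixes g :: "real \<Rightarrow> 'b::{complete_linorder, linorder_topology}"
  assumes antimono: "\<And>a b. 0 < a \<Longrightarrow> a \<le> b \<Longrightarrow> g b \<le> g a"
  shows "Lim (at_right 0) g = (SUP \<epsilon>\<in>{0<..}. g \<epsilon>)"
proof (intro tendsto_Lim trivial_limit_at_right_real order_tendstoI)
  fix a assume "a < (SUP \<epsilon>\<in>{0<..}. g \<epsilon>)"
  then obtain \<epsilon> where "\<epsilon> > 0" "a < g \<epsilon>"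
    by (auto simp: less_SUP_iff)
  then show "\<forall>\<^sub>F x in at_right 0. a < g x"
    unfolding eventually_at_right_field
    by (intro exI[of _ \<epsilon>]) (auto intro: order.strict_trans2[OF _ antimono])
next
  fix a assume "(SUP \<epsilon>\<in>{0<..}. g \<epsilon>) < a"
  then show "\<forall>\<^sub>F x in at_right 0. g x < a"
    unfolding eventually_at_right_field
    by (intro exI[of _ 1]) (auto intro: order.strict_trans1[OF SUP_upper])
qed

lemma neg_log_ratio_antimono:
  assumes "finite_measure \<mu>" "B' \<in> sets \<mu>" "B \<subseteq> B'"
  shows "neg_log_ratio \<mu> B' n \<le> neg_log_ratio \<mu> B n"
proof -
  interpret finite_measure \<mu> by fact
  have "measure \<mu> B \<le> measure \<mu> B'"
    using assms by (intro finite_measure_mono)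
  show ?thesis
  proof (cases "measure \<mu> B = 0")
    case False
    then have "0 < measure \<mu> B"
      using measure_nonneg[of \<mu> B] by linarith
    with \<open>measure \<mu> B \<le> measure \<mu> B'\<close> show ?thesis
      by (simp add: neg_log_ratio_def divide_right_mono)
  qed (simp add: neg_log_ratio_def)
qed

lemma measure_le_exp_if_less_neg_log_ratio:
  assumes "n > 0" "ereal t < neg_log_ratio \<mu> B n"
  shows "measure \<mu> B \<le> exp (- real n * t)"
proof (cases "measure \<mu> B = 0")
  case False
  then have "measure \<mu> B > 0"
    using measure_nonneg[of \<mu> B] by linarith
  moreover have "ln (measure \<mu> B) < - real n * t"
    using assms False by (simp add: neg_log_ratio_def field_simps)
  ultimately show ?thesis
    by (metis exp_less_mono exp_ln less_imp_le)
qed simp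

definition local_lower_entropy_eps ::
  "'a::metric_space set \<Rightarrow> ('a \<Rightarrow> 'a) \<Rightarrow> 'a measure \<Rightarrow> real \<Rightarrow> 'a \<Rightarrow> real \<Rightarrow> ereal" where
  "local_lower_entropy_eps X f \<mu> \<alpha> x \<epsilon> = liminf (\<lambda>n. neg_log_ratio \<mu> (Bn_alpha X f \<alpha> n x \<epsilon>) n)"

definition top_entropy_alpha_eps :: "'a::metric_space set \<Rightarrow> ('a \<Rightarrow> 'a) \<Rightarrow> real \<Rightarrow> real \<Rightarrow> ereal" where
  "top_entropy_alpha_eps X f \<alpha> \<epsilon> = limsup (\<lambda>n. ereal (ln (real (r_span X f \<alpha> n \<epsilon>)) / real n))"

lemma local_lower_entropy_eps_antimono:
  assumes "continuous_on X f" "f ` X \<subseteq> X" "finite_measure \<mu>"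
    and "sets \<mu> = sets (restrict_space borel X)" "\<epsilon> \<le> \<epsilon>'"
  shows "local_lower_entropy_eps X f \<mu> \<alpha> x \<epsilon>' \<le> local_lower_entropy_eps X f \<mu> \<alpha> x \<epsilon>"
proof -
  have "neg_log_ratio \<mu> (Bn_alpha X f \<alpha> n x \<epsilon>') n \<le> neg_log_ratio \<mu> (Bn_alpha X f \<alpha> n x \<epsilon>) n"
    for n
    using assms(5) by (intro neg_log_ratio_antimono Bn_alpha_in_sets assms(1-4)) (auto simp: Bn_alpha_def)
  then show ?thesis
    unfolding local_lower_entropy_eps_def by (intro Liminf_mono always_eventually) auto
qed

lemma local_lower_entropy_eq_SUP:
  assumes "continuous_on X f" "f ` X \<subseteq> X" "finite_measure \<mu>"
    and "sets \<mu> = sets (restrict_space borel X)"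
  shows "local_lower_entropy X f \<mu> \<alpha> x = (SUP \<epsilon>\<in>{0<..}. local_lower_entropy_eps X f \<mu> \<alpha> x \<epsilon>)"
  unfolding local_lower_entropy_def local_lower_entropy_eps_def[symmetric]
  by (intro Lim_at_right_0_antimono local_lower_entropy_eps_antimono assms)

lemma ln_of_nat_nonneg: "0 \<le> ln (real k)"
  by (cases "k = 0") auto

lemma ln_of_nat_mono: "j \<le> k \<Longrightarrow> ln (real j) \<le> ln (real k)"
  using ln_of_nat_nonneg[of k] by (cases "j = 0") auto

lemma top_entropy_alpha_eps_antimono:
  assumes "TDS X f" "0 < \<epsilon>" "\<epsilon> \<le> \<epsilon>'"
  shows "top_entropy_alpha_eps X f \<alpha> \<epsilon>' \<le> top_entropy_alpha_eps X f \<alpha> \<epsilon>"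
proof -
  have "ln (real (r_span X f \<alpha> n \<epsilon>')) / n \<le> ln (real (r_span X f \<alpha> n \<epsilon>)) / n" for n
    using assms(2,3)
    by (cases "n = 0") (auto intro!: divide_right_mono ln_of_nat_mono r_span_antimono[OF assms(1)])
  then show ?thesis
    unfolding top_entropy_alpha_eps_def by (intro Limsup_mono always_eventually) auto
qed

lemma top_entropy_alpha_eq_SUP:
  assumes "TDS X f"
  shows "top_entropy_alpha X f \<alpha> = (SUP \<epsilon>\<in>{0<..}. top_entropy_alpha_eps X f \<alpha> \<epsilon>)"
  unfolding top_entropy_alpha_def top_entropy_alpha_eps_def[symmetric]
  by (intro Lim_at_right_0_antimono top_entropy_alpha_eps_antimono assms)

lemma top_entropy_alpha_nonneg:
  assumes "TDS X f"
  shows "0 \<le> top_entropy_alpha X f \<alpha>"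
proof -
  have "0 \<le> top_entropy_alpha_eps X f \<alpha> 1"
    unfolding top_entropy_alpha_eps_def
    by (rule le_Limsup) (simp_all add: ln_of_nat_nonneg)
  also have "\<dots> \<le> top_entropy_alpha X f \<alpha>"
    unfolding top_entropy_alpha_eq_SUP[OF assms] by (intro SUP_upper) simp
  finally show ?thesis .
qed

lemma spanning_cover_measure_le:
  fixes c :: real
  assumes "continuous_on X f" "f ` X \<subseteq> X" "sets \<mu> = sets (restrict_space borel X)" "n > 0"
    and E: "finite E" "spanning X f \<alpha> n (\<epsilon>/2) E"
    and A: "A \<subseteq> X" "\<And>x. x \<in> A \<Longrightarrow> measure \<mu> (Bn_alpha X f \<alpha> n x \<epsilon>) \<le> c" and "0 \<le> c"
  obtains C where "C \<in> sets \<mu>" "A \<subseteq> C" "measure \<mu> C \<le> card E * c"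
proof -
  define Y where "Y = {y\<in>E. \<exists>x. x \<in> A \<and> dn_alpha f \<alpha> n x y < \<epsilon>/2}"
  have "\<forall>y\<in>Y. \<exists>x. x \<in> A \<and> dn_alpha f \<alpha> n x y < \<epsilon>/2"
    by (simp add: Y_def)
  from bchoice[OF this] obtain x where x: "\<forall>y\<in>Y. x y \<in> A \<and> dn_alpha f \<alpha> n (x y) y < \<epsilon>/2"
    by blast
  define C where "C = (\<Union>y\<in>Y. Bn_alpha X f \<alpha> n (x y) \<epsilon>)"
  have "finite Y"
    using E(1) by (simp add: Y_def)
  have C_sets: "C \<in> sets \<mu>"
    unfolding C_def by (rule sets.finite_UN[OF \<open>finite Y\<close> Bn_alpha_in_sets[OF assms(1-3)]])
  have "A \<subseteq> C"
  proof
    fix z assume "z \<in> A"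
    with A(1) E(2) obtain y where "y \<in> E" "dn_alpha f \<alpha> n z y < \<epsilon>/2"
      unfolding spanning_def by blast
    with \<open>z \<in> A\<close> have "y \<in> Y"
      by (auto simp: Y_def)
    have "z \<in> Bn_alpha X f \<alpha> n (x y) (\<epsilon>/2 + \<epsilon>/2)"
    proof (rule mem_Bn_alpha_if_near[OF \<open>n > 0\<close>])
      show "z \<in> X" "dn_alpha f \<alpha> n z y < \<epsilon>/2"
        using \<open>z \<in> A\<close> A(1) \<open>dn_alpha f \<alpha> n z y < \<epsilon>/2\<close> by auto
      show "dn_alpha f \<alpha> n (x y) y < \<epsilon>/2"
        using x \<open>y \<in> Y\<close> by blast
    qed
    with \<open>y \<in> Y\<close> show "z \<in> C"
      unfolding C_def by auto
  qed
  have "measure \<mu> C \<le> (\<Sum>y\<in>Y. measure \<mu> (Bn_alpha X f \<alpha> n (x y) \<epsilon>))"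
    unfolding C_def by (rule measure_UNION_le[OF \<open>finite Y\<close> Bn_alpha_in_sets[OF assms(1-3)]])
  also have "\<dots> \<le> (\<Sum>y\<in>Y. c)"
    using x A(2) by (intro sum_mono) simp
  also have "\<dots> \<le> card E * c"
  proof -
    have "card Y \<le> card E"
      using E(1) by (auto simp: Y_def intro: card_mono)
    with \<open>0 \<le> c\<close> show ?thesis
      by (simp add: mult_right_mono)
  qed
  finally show thesis
    using C_sets \<open>A \<subseteq> C\<close> that by blast
qed

lemma AE_notin_if_arbitrarily_small_cover:
  assumes "finite_measure M" "\<And>e. e > 0 \<Longrightarrow> \<exists>C\<in>sets M. A \<subseteq> C \<and> measure M C < e"
  shows "AE x in M. x \<notin> A"
proof -
  interpret finite_measure M by fact
  have "\<exists>C. C \<in> sets M \<and> A \<subseteq> C \<and> measure M C < 1 / Suc m" for m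
    using assms(2)[of "1 / Suc m"] by auto
  then obtain C where C: "\<And>m. C m \<in> sets M" "\<And>m. A \<subseteq> C m" "\<And>m. measure M (C m) < 1 / Suc m"
    by metis
  define D where "D = (\<Inter>m. C m)"
  have "D \<in> sets M"
    unfolding D_def using C(1) by (intro sets.countable_INT) auto
  have "measure M D = 0"
  proof (rule ccontr)
    assume "measure M D \<noteq> 0"
    then have "measure M D > 0"
      using measure_nonneg[of M D] by linarith
    then obtain m where "inverse (real (Suc m)) < measure M D"
      using reals_Archimedean by blast
    moreover have "measure M D \<le> measure M (C m)"
      using C(1) \<open>D \<in> sets M\<close> by (intro finite_measure_mono) (auto simp: D_def)
    ultimately show False
      using C(3)[of m] by (simp add: inverse_eq_divide)
  qed
  with \<open>D \<in> sets M\<close> have "D \<in> null_sets M"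
    by (simp add: null_sets_def emeasure_eq_measure)
  then show ?thesis
    by (rule AE_I') (use C(2) in \<open>auto simp: D_def\<close>)
qed

lemma eventually_small_spanning_set:
  assumes "TDS X f" "\<epsilon> > 0" "top_entropy_alpha_eps X f \<alpha> \<epsilon> < ereal s"
  shows "\<forall>\<^sub>F n in sequentially. \<exists>E. finite E \<and> spanning X f \<alpha> n \<epsilon> E \<and> card E \<le> exp (real n * s)"
proof -
  have "\<forall>\<^sub>F n in sequentially. ereal (ln (real (r_span X f \<alpha> n \<epsilon>)) / real n) < ereal s"
    using assms(3) unfolding top_entropy_alpha_eps_def by (rule Limsup_lessD)
  with eventually_gt_at_top[of 0] show ?thesis
  proof eventually_elim
    case (elim n)
    obtain E where E: "finite E" "card E = r_span X f \<alpha> n \<epsilon>" "spanning X f \<alpha> n \<epsilon> E"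
      using r_span_spanning_set[OF assms(1) \<open>0 < n\<close> \<open>\<epsilon> > 0\<close>] .
    have "real (card E) \<le> exp (real n * s)"
    proof (cases "card E = 0")
      case False
      have "ln (real (card E)) < real n * s"
        using elim E(2) by (simp add: field_simps)
      then have "exp (ln (real (card E))) \<le> exp (real n * s)"
        by simp
      with False show ?thesis by simp
    qed simp
    with E(1,3) show ?case by blast
  qed
qed

lemma small_cover_of_Bn_alpha_decay_set:
  fixes N :: nat
  assumes "TDS X f" "sets \<mu> = sets (restrict_space borel X)" "\<epsilon> > 0"
    and "top_entropy_alpha_eps X f \<alpha> (\<epsilon>/2) < ereal s" "s < t" "e > 0"
  defines "A \<equiv> {x \<in> X. \<forall>n\<ge>N. measure \<mu> (Bn_alpha X f \<alpha> n x \<epsilon>) \<le> exp (- real n * t)}"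
  shows "\<exists>C\<in>sets \<mu>. A \<subseteq> C \<and> measure \<mu> C < e"
proof -
  have cont: "continuous_on X f" "f ` X \<subseteq> X"
    using assms(1) by (auto simp: TDS_def)
  have "(\<lambda>n. exp (- real n * (t - s))) \<longlonglongrightarrow> 0"
    using \<open>s < t\<close> by real_asymp
  then have "\<forall>\<^sub>F n in sequentially. exp (- real n * (t - s)) < e"
    using \<open>e > 0\<close> by (rule order_tendstoD)
  moreover have "\<forall>\<^sub>F n in sequentially. max N 1 \<le> n"
    by (rule eventually_ge_at_top)
  moreover have "\<forall>\<^sub>F n in sequentially.
      \<exists>E. finite E \<and> spanning X f \<alpha> n (\<epsilon>/2) E \<and> card E \<le> exp (real n * s)"
    using assms(1,4) \<open>\<epsilon> > 0\<close> by (intro eventually_small_spanning_set) simp_all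
  ultimately have "\<forall>\<^sub>F n in sequentially. exp (- real n * (t - s)) < e \<and> N \<le> n \<and> 0 < n \<and>
      (\<exists>E. finite E \<and> spanning X f \<alpha> n (\<epsilon>/2) E \<and> card E \<le> exp (real n * s))"
    by eventually_elim auto
  then obtain n E where n: "exp (- real n * (t - s)) < e" "N \<le> n" "0 < n"
    and E: "finite E" "spanning X f \<alpha> n (\<epsilon>/2) E" "card E \<le> exp (real n * s)"
    using eventually_happens'[OF sequentially_bot] by blast
  have small_balls: "measure \<mu> (Bn_alpha X f \<alpha> n x \<epsilon>) \<le> exp (- real n * t)" if "x \<in> A" for x
    using that \<open>N \<le> n\<close> by (simp add: A_def)
  have "A \<subseteq> X"
    by (simp add: A_def)
  obtain C where C: "C \<in> sets \<mu>" "A \<subseteq> C" "measure \<mu> C \<le> card E * exp (- real n * t)"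
    by (rule spanning_cover_measure_le[OF cont assms(2) \<open>0 < n\<close> E(1,2) \<open>A \<subseteq> X\<close> small_balls
          exp_ge_zero])
  note C(3)
  also have "card E * exp (- real n * t) \<le> exp (real n * s) * exp (- real n * t)"
    using E(3) by (rule mult_right_mono) simp
  also have "\<dots> = exp (- real n * (t - s))"
    by (simp flip: exp_add add: algebra_simps)
  also note n(1)
  finally show ?thesis
    using C(1,2) by blast
qed

lemma AE_not_eventually_measure_Bn_alpha_le:
  assumes "TDS X f" "finite_measure \<mu>" "sets \<mu> = sets (restrict_space borel X)" "\<epsilon> > 0"
    and "top_entropy_alpha_eps X f \<alpha> (\<epsilon>/2) < ereal s" "s < t"
  shows "AE x in \<mu>. \<not> (\<forall>\<^sub>F n in sequentially. measure \<mu> (Bn_alpha X f \<alpha> n x \<epsilon>) \<le> exp (- real n * t))"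
proof -
  have "AE x in \<mu>. x \<notin> {x \<in> X. \<forall>n\<ge>N. measure \<mu> (Bn_alpha X f \<alpha> n x \<epsilon>) \<le> exp (- real n * t)}"
    for N
    by (rule AE_notin_if_arbitrarily_small_cover[OF assms(2) small_cover_of_Bn_alpha_decay_set])
      (use assms in auto)
  then have "AE x in \<mu>. \<forall>N. x \<notin> {x \<in> X. \<forall>n\<ge>N. measure \<mu> (Bn_alpha X f \<alpha> n x \<epsilon>) \<le> exp (- real n * t)}"
    by (subst AE_all_countable) blast
  then show ?thesis
    using AE_space
  proof eventually_elim
    case (elim x)
    moreover have "space \<mu> = X"
      using sets_eq_imp_space_eq[OF assms(3)] by (simp add: space_restrict_space)
    ultimately show ?case
      unfolding eventually_sequentially by blast
  qed
qed

lemma eventually_measure_Bn_alpha_le_exp: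
  assumes "continuous_on X f" "f ` X \<subseteq> X" "finite_measure \<mu>"
    and "sets \<mu> = sets (restrict_space borel X)"
    and "ereal t < local_lower_entropy X f \<mu> \<alpha> x"
  obtains k :: nat
  where "\<forall>\<^sub>F n in sequentially. measure \<mu> (Bn_alpha X f \<alpha> n x (1 / Suc k)) \<le> exp (- real n * t)"
proof -
  obtain \<epsilon> where "\<epsilon> > 0" "ereal t < local_lower_entropy_eps X f \<mu> \<alpha> x \<epsilon>"
    using assms(5) by (auto simp: local_lower_entropy_eq_SUP[OF assms(1-4)] less_SUP_iff)
  moreover obtain k where "inverse (real (Suc k)) < \<epsilon>"
    using reals_Archimedean[OF \<open>\<epsilon> > 0\<close>] ..
  ultimately have "ereal t < local_lower_entropy_eps X f \<mu> \<alpha> x (1 / Suc k)"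
    using local_lower_entropy_eps_antimono[OF assms(1-4), of "1 / Suc k" \<epsilon> \<alpha> x]
    by (simp add: inverse_eq_divide)
  then have "\<forall>\<^sub>F n in sequentially. ereal t < neg_log_ratio \<mu> (Bn_alpha X f \<alpha> n x (1 / Suc k)) n"
    unfolding local_lower_entropy_eps_def by (rule less_LiminfD)
  with eventually_gt_at_top[of 0]
  have "\<forall>\<^sub>F n in sequentially. measure \<mu> (Bn_alpha X f \<alpha> n x (1 / Suc k)) \<le> exp (- real n * t)"
    by eventually_elim (rule measure_le_exp_if_less_neg_log_ratio)
  then show thesis by (rule that)
qed

lemma AE_local_lower_entropy_le:
  assumes "TDS X f" "finite_measure \<mu>" "sets \<mu> = sets (restrict_space borel X)"
    and "top_entropy_alpha X f \<alpha> < ereal t"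
  shows "AE x in \<mu>. local_lower_entropy X f \<mu> \<alpha> x \<le> ereal t"
proof -
  have cont: "continuous_on X f" "f ` X \<subseteq> X"
    using assms(1) by (auto simp: TDS_def)
  obtain s where s: "top_entropy_alpha X f \<alpha> < ereal s" "s < t"
    using ereal_dense2[OF assms(4)] by auto
  have "AE x in \<mu>. \<not> (\<forall>\<^sub>F n in sequentially.
      measure \<mu> (Bn_alpha X f \<alpha> n x (1 / Suc k)) \<le> exp (- real n * t))" for k
  proof (rule AE_not_eventually_measure_Bn_alpha_le[OF assms(1-3) _ _ \<open>s < t\<close>])
    have "top_entropy_alpha_eps X f \<alpha> (1 / Suc k / 2) \<le> top_entropy_alpha X f \<alpha>"
      unfolding top_entropy_alpha_eq_SUP[OF assms(1)] by (intro SUP_upper) simp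
    then show "top_entropy_alpha_eps X f \<alpha> (1 / Suc k / 2) < ereal s"
      using s(1) by (rule le_less_trans)
  qed simp
  then have "AE x in \<mu>. \<forall>k. \<not> (\<forall>\<^sub>F n in sequentially.
      measure \<mu> (Bn_alpha X f \<alpha> n x (1 / Suc k)) \<le> exp (- real n * t))"
    by (subst AE_all_countable) blast
  then show ?thesis
  proof eventually_elim
    case (elim x)
    show ?case
    proof (rule ccontr)
      assume "\<not> local_lower_entropy X f \<mu> \<alpha> x \<le> ereal t"
      then have "ereal t < local_lower_entropy X f \<mu> \<alpha> x"
        by simp
      then obtain k where "\<forall>\<^sub>F n in sequentially.
          measure \<mu> (Bn_alpha X f \<alpha> n x (1 / Suc k)) \<le> exp (- real n * t)"
        by (rule eventually_measure_Bn_alpha_le_exp[OF cont assms(2,3)])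
      with elim show False by blast
    qed
  qed
qed

lemma AE_le_if_AE_le_above:
  fixes g :: "'a \<Rightarrow> ereal"
  assumes "\<And>t. c < ereal t \<Longrightarrow> AE x in M. g x \<le> ereal t"
  shows "AE x in M. g x \<le> c"
proof -
  have "countable {t \<in> \<rat>. c < ereal t}"
    by (rule countable_subset[OF _ countable_rat]) blast
  then have "AE x in M. \<forall>t \<in> {t \<in> \<rat>. c < ereal t}. g x \<le> ereal t"
    using assms by (subst AE_ball_countable) auto
  then show ?thesis
  proof eventually_elim
    case (elim x)
    show ?case
    proof (rule ccontr)
      assume "\<not> g x \<le> c"
      then obtain u where u: "c < ereal u" "ereal u < g x"
        using ereal_dense2 by (meson not_le)
      from ereal_dense2[OF u(2)] obtain v where v: "ereal u < ereal v" "ereal v < g x"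
        by blast
      then obtain q where "q \<in> \<rat>" "u < q" "q < v"
        using Rats_dense_in_real by force
      from u(1) have "c < ereal q"
        using \<open>u < q\<close> by (simp add: less_trans)
      with \<open>q \<in> \<rat>\<close> elim have "g x \<le> ereal q"
        by blast
      moreover have "ereal q < ereal v"
        using \<open>q < v\<close> by simp
      ultimately show False
        using v(2) by (meson le_less_trans less_asym)
    qed
  qed
qed

lemma lower_BK_entropy_le_top_entropy_alpha:
  assumes "TDS X f" "prob_space \<mu>" "sets \<mu> = sets (restrict_space borel X)"
  shows "lower_BK_entropy X f \<mu> \<alpha> \<le> top_entropy_alpha X f \<alpha>"
proof -
  interpret prob_space \<mu> by fact
  have "finite_measure \<mu>"
    using assms(2) by (simp add: prob_space_def)
  have "AE x in \<mu>. local_lower_entropy X f \<mu> \<alpha> x \<le> top_entropy_alpha X f \<alpha>"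
  proof (rule AE_le_if_AE_le_above)
    fix t assume "top_entropy_alpha X f \<alpha> < ereal t"
    then show "AE x in \<mu>. local_lower_entropy X f \<mu> \<alpha> x \<le> ereal t"
      by (rule AE_local_lower_entropy_le[OF assms(1) \<open>finite_measure \<mu>\<close> assms(3)])
  qed
  then have "AE x in \<mu>. e2ennreal (local_lower_entropy X f \<mu> \<alpha> x) \<le> e2ennreal (top_entropy_alpha X f \<alpha>)"
    by eventually_elim (rule e2ennreal_mono)
  then have "(\<integral>\<^sup>+ x. e2ennreal (local_lower_entropy X f \<mu> \<alpha> x) \<partial>\<mu>)
      \<le> (\<integral>\<^sup>+ x. e2ennreal (top_entropy_alpha X f \<alpha>) \<partial>\<mu>)"
    by (rule nn_integral_mono_AE)
  also have "\<dots> = e2ennreal (top_entropy_alpha X f \<alpha>)"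
    by (simp add: emeasure_space_1)
  finally have "enn2ereal (\<integral>\<^sup>+ x. e2ennreal (local_lower_entropy X f \<mu> \<alpha> x) \<partial>\<mu>)
      \<le> enn2ereal (e2ennreal (top_entropy_alpha X f \<alpha>))"
    by (simp add: less_eq_ennreal.rep_eq)
  then show ?thesis
    unfolding lower_BK_entropy_def
    by (simp add: enn2ereal_e2ennreal top_entropy_alpha_nonneg[OF assms(1)])
qed

theorem theorem4p4:
  fixes X :: "'a::metric_space set" and f :: "'a \<Rightarrow> 'a" and \<alpha> :: real
  assumes "TDS X f" and "\<alpha> > 0"
  shows "(SUP \<mu> \<in> invariant_measures X f. lower_BK_entropy X f \<mu> \<alpha>) \<le> top_entropy_alpha X f \<alpha>"
proof (rule SUP_least)
  fix \<mu> assume "\<mu> \<in> invariant_measures X f"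
  then have "prob_space \<mu>" "sets \<mu> = sets (restrict_space borel X)"
    by (auto simp: invariant_measures_def)
  then show "lower_BK_entropy X f \<mu> \<alpha> \<le> top_entropy_alpha X f \<alpha>"
    by (rule lower_BK_entropy_le_top_entropy_alpha[OF assms(1)])
qed

end
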